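(* For any string $\mathcal S\in\Sigma^n$ and any order-preserving permutation $\pi$ for $\mathcal S$, for every $i>1$ it holds $\mathrm{LPF}_\pi[i]\ge\mathrm{LPF}_\pi[i-1]-1$. In particular, the sequence $i+\mathrm{LPF}_\pi[i]$, for $i=1,\dots,n$, is nondecreasing.
   Context: For $i\ne j$, $\mathrm{rlce}(i,j)$ is the length of the longest common prefix of $\mathcal S[i,n]$ and $\mathcal S[j,n]$. A permutation $\pi:[n]\to[n]$ is order-preserving for $\mathcal S$ if for all $i,j\in[n-1]$, $\pi(i)<\pi(j)$ and $\mathcal S[i,i+1]=\mathcal S[j,j+1]$ imply $\pi(i+1)<\pi(j+1)$. $\mathrm{LPF}_\pi[i]=0$ if $\pi(i)=1$, else $\mathrm{LPF}_\pi[i]=\max_{\pi(j)<\pi(i)}\mathrm{rlce}(j,i)$. *)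

theory Defs
  imports "HOL-Combinatorics.Permutations"
begin

text \<open>Strings are lists; positions are 1-based: position i of S is S ! (i - 1),
  and the suffix S[i,n] is drop (i - 1) S.\<close>

fun lcp_len :: "'a list \<Rightarrow> 'a list \<Rightarrow> nat" where
  "lcp_len (x # xs) (y # ys) = (if x = y then Suc (lcp_len xs ys) else 0)"
| "lcp_len _ _ = 0"

definition rlce :: "'a list \<Rightarrow> nat \<Rightarrow> nat \<Rightarrow> nat" where
  "rlce S i j = lcp_len (drop (i - 1) S) (drop (j - 1) S)"

definition substr2 :: "'a list \<Rightarrow> nat \<Rightarrow> 'a list" where
  "substr2 S i = take 2 (drop (i - 1) S)"

definition order_preserving :: "'a list \<Rightarrow> (nat \<Rightarrow> nat) \<Rightarrow> bool" where
  "order_preserving S \<pi> \<longleftrightarrow>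
     \<pi> permutes {1..length S} \<and>
     (\<forall>i \<in> {1..length S - 1}. \<forall>j \<in> {1..length S - 1}.
        \<pi> i < \<pi> j \<and> substr2 S i = substr2 S j \<longrightarrow> \<pi> (i + 1) < \<pi> (j + 1))"

definition LPF :: "'a list \<Rightarrow> (nat \<Rightarrow> nat) \<Rightarrow> nat \<Rightarrow> nat" where
  "LPF S \<pi> i = (if \<pi> i = 1 then 0
      else Max {rlce S j i | j. j \<in> {1..length S} \<and> \<pi> j < \<pi> i})"

end

theory Submission
  imports Defs
begin

text \<open>Let L = LPF[i] \<ge> 2 be attained at j with \<pi>(j) < \<pi>(i). The suffixes at j and i then
  agree on their first two letters, i.e. S[j,j+1] = S[i,i+1], so order preservation gives
  \<pi>(j+1) < \<pi>(i+1); and the suffixes at j+1 and i+1 still share L - 1 letters. Hence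
  LPF[i+1] \<ge> LPF[i] - 1, which is also trivial when LPF[i] \<le> 1. Adding 1 to both sides
  gives the monotonicity of i + LPF[i].\<close>

lemma lcp_len_le_length: "lcp_len xs ys \<le> length xs"
  by (induction xs ys rule: lcp_len.induct) auto

lemma take_lcp_len: "k \<le> lcp_len xs ys \<Longrightarrow> take k xs = take k ys"
proof (induction xs ys arbitrary: k rule: lcp_len.induct)
  case (1 x xs y ys)
  then show ?case by (cases k) (auto split: if_splits)
qed auto

lemma lcp_len_tl: "lcp_len xs ys > 0 \<Longrightarrow> lcp_len (tl xs) (tl ys) = lcp_len xs ys - 1"
  by (cases "(xs, ys)" rule: lcp_len.cases) (auto split: if_splits)

lemma rlce_Suc_Suc:
  assumes "j \<ge> 1" "i \<ge> 1" "rlce S j i > 0"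
  shows "rlce S (Suc j) (Suc i) = rlce S j i - 1"
proof -
  have tl_drop_pred: "tl (drop (k - 1) S) = drop k S" if "k \<ge> 1" for k
    using that by (cases k) (simp_all add: drop_Suc tl_drop)
  show ?thesis
    using lcp_len_tl[of "drop (j - 1) S" "drop (i - 1) S"] assms(3)
    unfolding rlce_def tl_drop_pred[OF assms(1)] tl_drop_pred[OF assms(2)] by simp
qed

lemma substr2_eq_if_rlce_ge_2: "rlce S j i \<ge> 2 \<Longrightarrow> substr2 S j = substr2 S i"
  unfolding rlce_def substr2_def by (rule take_lcp_len)

lemma Suc_le_length_if_rlce_ge_2:
  assumes "j \<ge> 1" "rlce S j i \<ge> 2"
  shows "Suc j \<le> length S"
proof -
  have "2 \<le> length S - (j - 1)"
    using lcp_len_le_length[of "drop (j - 1) S" "drop (i - 1) S"] assms(2)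
    unfolding rlce_def by simp
  then show ?thesis
    using assms(1) by linarith
qed

lemma rlce_le_LPF:
  assumes "\<pi> permutes {1..length S}" "j \<in> {1..length S}" "\<pi> j < \<pi> i"
  shows "rlce S j i \<le> LPF S \<pi> i"
proof -
  have "\<pi> j \<ge> 1"
    using assms(1,2) permutes_in_image by fastforce
  then show ?thesis
    using assms(2,3) unfolding LPF_def by (auto intro: Max_ge)
qed

lemma LPF_attained:
  assumes perm: "\<pi> permutes {1..length S}" and i: "i \<in> {1..length S}"
    and pos: "LPF S \<pi> i > 0"
  obtains j where "j \<in> {1..length S}" "\<pi> j < \<pi> i" "rlce S j i = LPF S \<pi> i"
proof -
  let ?A = "{rlce S j i | j. j \<in> {1..length S} \<and> \<pi> j < \<pi> i}"
  have "\<pi> i \<noteq> 1"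
    using pos unfolding LPF_def by auto
  then have LPF_eq: "LPF S \<pi> i = Max ?A"
    unfolding LPF_def by simp
  have "\<pi> i \<in> {1..length S}"
    using permutes_in_image[OF perm] i by blast
  then have "1 \<in> \<pi> ` {1..length S}"
    unfolding permutes_image[OF perm] by simp
  then obtain j0 where "j0 \<in> {1..length S}" "\<pi> j0 = 1"
    by (metis imageE)
  with \<open>\<pi> i \<noteq> 1\<close> \<open>\<pi> i \<in> {1..length S}\<close> have "?A \<noteq> {}"
    by fastforce
  then have "Max ?A \<in> ?A"
    by (intro Max_in) auto
  then show ?thesis
    using that unfolding LPF_eq by auto
qed

lemma LPF_le_Suc_LPF_Suc:
  assumes op: "order_preserving S \<pi>" and i: "i \<ge> 1" "Suc i \<le> length S"
  shows "LPF S \<pi> i \<le> Suc (LPF S \<pi> (Suc i))"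
proof (cases "LPF S \<pi> i \<le> 1")
  case False
  have perm: "\<pi> permutes {1..length S}"
    using op unfolding order_preserving_def by blast
  moreover have "i \<in> {1..length S}" "LPF S \<pi> i > 0"
    using i False by auto
  ultimately obtain j where j: "j \<in> {1..length S}" "\<pi> j < \<pi> i"
    and L: "rlce S j i = LPF S \<pi> i"
    by (rule LPF_attained)
  with False have "rlce S j i \<ge> 2"
    by simp
  then have "substr2 S j = substr2 S i" and "Suc j \<le> length S"
    using j(1) by (auto intro: substr2_eq_if_rlce_ge_2 Suc_le_length_if_rlce_ge_2)
  moreover have "j \<in> {1..length S - 1}" "i \<in> {1..length S - 1}"
    using \<open>Suc j \<le> length S\<close> j(1) i by auto
  ultimately have "\<pi> (j + 1) < \<pi> (i + 1)"
    using op j(2) unfolding order_preserving_def by blast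
  then have "rlce S (Suc j) (Suc i) \<le> LPF S \<pi> (Suc i)"
    using rlce_le_LPF[OF perm, of "Suc j"] \<open>Suc j \<le> length S\<close> by simp
  moreover have "rlce S (Suc j) (Suc i) = LPF S \<pi> i - 1"
    using rlce_Suc_Suc[of j i S] j(1) i L False by simp
  ultimately show ?thesis
    by simp
qed simp

theorem lemma11:
  fixes S :: "'a list" and \<pi> :: "nat \<Rightarrow> nat"
  assumes "order_preserving S \<pi>"
  shows "(\<forall>i \<in> {2..length S}. int (LPF S \<pi> i) \<ge> int (LPF S \<pi> (i - 1)) - 1)
       \<and> mono_on {1..length S} (\<lambda>i. i + LPF S \<pi> i)"
proof
  show "\<forall>i \<in> {2..length S}. int (LPF S \<pi> i) \<ge> int (LPF S \<pi> (i - 1)) - 1"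
  proof
    fix i assume "i \<in> {2..length S}"
    then obtain k where "i = Suc k" "k \<ge> 1" "Suc k \<le> length S"
      by (cases i) auto
    then have "LPF S \<pi> (i - 1) \<le> Suc (LPF S \<pi> i)"
      using LPF_le_Suc_LPF_Suc[OF assms] by simp
    then show "int (LPF S \<pi> i) \<ge> int (LPF S \<pi> (i - 1)) - 1"
      by simp
  qed
  have step: "k + LPF S \<pi> k \<le> Suc k + LPF S \<pi> (Suc k)" if "k \<in> {1..<length S}" for k
    using LPF_le_Suc_LPF_Suc[OF assms, of k] that by simp
  show "mono_on {1..length S} (\<lambda>i. i + LPF S \<pi> i)"
  proof (rule mono_onI)
    fix r s assume "r \<in> {1..length S}" "s \<in> {1..length S}" "r \<le> s"
    then have "{r..<s} \<subseteq> {1..<length S}"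
      by auto
    with \<open>r \<le> s\<close> show "r + LPF S \<pi> r \<le> s + LPF S \<pi> s"
      using lift_Suc_mono_le_ivl[of "{1..<length S}" "\<lambda>i. i + LPF S \<pi> i"] step by blast
  qed
qed

end
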